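(* Let $V$ be a countable set, $\Omega_0$ a finite set, $\Omega=\Omega_0^V$ with product $\sigma$-algebra $\mathcal F$, $q\in\mathbb N$, and let $\gamma=(\gamma_\Lambda)_{\Lambda\Subset V}$ be a $q$-specification satisfying Assumption 1. For $\Lambda\Subset V$ let $V_{q,\Lambda}:\mathcal M_1(\Omega,\mathcal F)\to\mathcal M_1(\Omega,\mathcal F)$ be given by $V_{q,\Lambda}(\lambda)(A)=\int_{\Omega^q}\gamma_\Lambda(A\mid\sigma_1,\dots,\sigma_q)\prod_{i=1}^q\lambda(d\sigma_i)$, $A\in\mathcal F$. Then $$\mathcal G_q(\gamma)=\bigcap_{\Lambda\Subset V}\mathrm{Im}(V_{q,\Lambda}).$$
   Context: $\mathcal M_1(\Omega,\mathcal F)$ is the set of probability measures on $(\Omega,\mathcal F)$; $\mathrm{Im}$ denotes the image. $\mathcal F_\Delta$ is generated by coordinates in $\Delta$; $\mathcal F^q_{\Lambda^c}=(\mathcal F_{\Lambda^c})^{\otimes q}$. A probability $q$-kernel is a map $\gamma_\Lambda:\mathcal F\times\Omega^q\to[0,1]$ with $\gamma_\Lambda(\cdot\mid\eta_1,\dots,\eta_q)$ a probability measure and $\gamma_\Lambda(A\mid\cdot)$ $\mathcal F^q_{\Lambda^c}$-measurable; proper means $\gamma_\Lambda(A\mid\eta_1,\dots,\eta_q)=\frac1q\sum_i\mathbf 1_A(\eta_i)$ for $A\in\mathcal F_{\Lambda^c}$. Composition: $(\gamma_\Delta\gamma_\Lambda)(A\mid\eta)=\int_{\Omega^q}\gamma_\Lambda(A\mid\zeta_1,\dots,\zeta_q)\prod_i\gamma_\Delta(d\zeta_i\mid\eta)$.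 A $q$-specification is a family of proper probability $q$-kernels with $\gamma_\Delta\gamma_\Lambda=\gamma_\Delta$ for $\Lambda\subset\Delta\Subset V$. $\mathcal G_q(\gamma)$ is the set of $\mu\in\mathcal M_1(\Omega,\mathcal F)$ with $V_{q,\Lambda}(\mu)=\mu$ for all $\Lambda\Subset V$. Assumption 1: for each $\Lambda\Subset V$ there is a measurable $\tilde\gamma_\Lambda:\mathcal F\times\mathcal M_1(\Omega)\to[0,1]$ with $\gamma_\Lambda(A\mid\sigma_1,\dots,\sigma_q)=\tilde\gamma_\Lambda\big(A;\frac1q\sum_{i=1}^q\delta_{\sigma_i}\big)$ for all $A,\sigma_1,\dots,\sigma_q$. *)

theory Defs
  imports "HOL-Probability.Probability"
begin

text \<open>Configuration space Omega = Omega0^V with the product sigma-algebra F.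
  V is the index type 'v (countable), Omega0 is the finite type 'a.\<close>
definition cfg :: "('v \<Rightarrow> 'a) measure" where
  "cfg = PiM UNIV (\<lambda>_. count_space UNIV)"

definition M1 :: "('v \<Rightarrow> 'a) measure set" where
  "M1 = {\<mu>. prob_space \<mu> \<and> sets \<mu> = sets (cfg :: ('v \<Rightarrow> 'a) measure)}"

definition Fsub :: "'v set \<Rightarrow> ('v \<Rightarrow> 'a) measure" where
  "Fsub D = vimage_algebra (space cfg) (\<lambda>\<omega>. restrict \<omega> D) (PiM D (\<lambda>_. count_space UNIV))"

definition qpow :: "nat \<Rightarrow> 'b measure \<Rightarrow> (nat \<Rightarrow> 'b) measure" where
  "qpow q M = PiM {..<q} (\<lambda>_. M)"

text \<open>A probability q-kernel gamma_Lambda, represented as eta \<mapsto> gamma_Lambda(. | eta).\<close>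
definition prob_q_kernel :: "nat \<Rightarrow> 'v set \<Rightarrow> ((nat \<Rightarrow> 'v \<Rightarrow> 'a) \<Rightarrow> ('v \<Rightarrow> 'a) measure) \<Rightarrow> bool" where
  "prob_q_kernel q L k \<longleftrightarrow>
     (\<forall>\<eta>\<in>space (qpow q cfg). prob_space (k \<eta>) \<and> sets (k \<eta>) = sets cfg) \<and>
     (\<forall>A\<in>sets cfg. (\<lambda>\<eta>. measure (k \<eta>) A) \<in> borel_measurable (qpow q (Fsub (- L))))"

definition proper_q_kernel :: "nat \<Rightarrow> 'v set \<Rightarrow> ((nat \<Rightarrow> 'v \<Rightarrow> 'a) \<Rightarrow> ('v \<Rightarrow> 'a) measure) \<Rightarrow> bool" where
  "proper_q_kernel q L k \<longleftrightarrow>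
     (\<forall>A\<in>sets (Fsub (- L)). \<forall>\<eta>\<in>space (qpow q cfg).
        measure (k \<eta>) A = (1 / real q) * (\<Sum>i<q. indicator A (\<eta> i)))"

definition kcomp :: "nat \<Rightarrow> ((nat \<Rightarrow> 'v \<Rightarrow> 'a) \<Rightarrow> ('v \<Rightarrow> 'a) measure)
      \<Rightarrow> ((nat \<Rightarrow> 'v \<Rightarrow> 'a) \<Rightarrow> ('v \<Rightarrow> 'a) measure) \<Rightarrow> ('v \<Rightarrow> 'a) set \<Rightarrow> (nat \<Rightarrow> 'v \<Rightarrow> 'a) \<Rightarrow> real" where
  "kcomp q kD kL A \<eta> = (\<integral>\<zeta>. measure (kL \<zeta>) A \<partial>(PiM {..<q} (\<lambda>_. kD \<eta>)))"

definition q_specification :: "nat \<Rightarrow> ('v set \<Rightarrow> (nat \<Rightarrow> 'v \<Rightarrow> 'a) \<Rightarrow> ('v \<Rightarrow> 'a) measure) \<Rightarrow> bool" where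
  "q_specification q \<gamma> \<longleftrightarrow>
     (\<forall>L. finite L \<longrightarrow> prob_q_kernel q L (\<gamma> L) \<and> proper_q_kernel q L (\<gamma> L)) \<and>
     (\<forall>L D. finite D \<longrightarrow> L \<subseteq> D \<longrightarrow>
        (\<forall>A\<in>sets cfg. \<forall>\<eta>\<in>space (qpow q cfg). kcomp q (\<gamma> D) (\<gamma> L) A \<eta> = measure (\<gamma> D \<eta>) A))"

text \<open>Empirical measure (1/q) sum_i delta_{sigma_i}.\<close>
definition empirical :: "nat \<Rightarrow> (nat \<Rightarrow> 'v \<Rightarrow> 'a) \<Rightarrow> ('v \<Rightarrow> 'a) measure" where
  "empirical q \<sigma> = distr (uniform_count_measure {..<q}) cfg \<sigma>"

text \<open>Assumption 1: gamma_Lambda(A | sigma) depends on sigma only through the empirical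
  measure, via a function gt : F x M_1(Omega) -> [0,1], measurable in the measure argument
  (w.r.t. the Giry sigma-algebra on M_1(Omega)).\<close>
definition assumption1 :: "nat \<Rightarrow> ('v set \<Rightarrow> (nat \<Rightarrow> 'v \<Rightarrow> 'a) \<Rightarrow> ('v \<Rightarrow> 'a) measure) \<Rightarrow> bool" where
  "assumption1 q \<gamma> \<longleftrightarrow>
     (\<forall>L. finite L \<longrightarrow>
       (\<exists>gt :: ('v \<Rightarrow> 'a) set \<Rightarrow> ('v \<Rightarrow> 'a) measure \<Rightarrow> real.
          (\<forall>A\<in>sets cfg. gt A \<in> borel_measurable (prob_algebra cfg)) \<and>
          (\<forall>A\<in>sets cfg. \<forall>m\<in>space (prob_algebra cfg). 0 \<le> gt A m \<and> gt A m \<le> 1) \<and>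
          (\<forall>A\<in>sets cfg. \<forall>\<sigma>\<in>space (qpow q cfg). measure (\<gamma> L \<sigma>) A = gt A (empirical q \<sigma>))))"

definition Vmap :: "nat \<Rightarrow> ('v set \<Rightarrow> (nat \<Rightarrow> 'v \<Rightarrow> 'a) \<Rightarrow> ('v \<Rightarrow> 'a) measure) \<Rightarrow> 'v set
      \<Rightarrow> ('v \<Rightarrow> 'a) measure \<Rightarrow> ('v \<Rightarrow> 'a) measure" where
  "Vmap q \<gamma> L m = measure_of (space cfg) (sets cfg)
      (\<lambda>A. ennreal (\<integral>\<sigma>. measure (\<gamma> L \<sigma>) A \<partial>(PiM {..<q} (\<lambda>_. m))))"

definition Gq :: "nat \<Rightarrow> ('v set \<Rightarrow> (nat \<Rightarrow> 'v \<Rightarrow> 'a) \<Rightarrow> ('v \<Rightarrow> 'a) measure) \<Rightarrow> ('v \<Rightarrow> 'a) measure set" where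
  "Gq q \<gamma> = {\<mu>\<in>M1. \<forall>L. finite L \<longrightarrow> Vmap q \<gamma> L \<mu> = \<mu>}"

end

theory Submission
  imports Defs
begin

text \<open>Since \<gamma>_\<Lambda>(A | \<sigma>_1, ..., \<sigma>_q) is measurable in \<sigma> with respect to F^q_{\<Lambda>^c},
  V_{q,\<Lambda>}(\<lambda>) depends on \<lambda> only through its restriction to F_{\<Lambda>^c}. On F_{\<Lambda>^c} the proper
  kernel is the empirical average of the q coordinates, so V_{q,\<Lambda>}(\<lambda>) agrees there with \<lambda>.
  Hence V_{q,\<Lambda>} is idempotent, and every measure in its image is a fixed point.\<close>

lemma measurable_ident_PiM_subalgebra:
  assumes "\<And>i. i \<in> I \<Longrightarrow> subalgebra (M i) (F i)"
  shows "(\<lambda>x. x) \<in> PiM I M \<rightarrow>\<^sub>M PiM I F"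
proof (rule measurable_PiM_single')
  fix i assume "i \<in> I"
  then have "(\<lambda>x. x i) \<in> PiM I M \<rightarrow>\<^sub>M M i"
    by (rule measurable_component_singleton)
  then show "(\<lambda>x. x i) \<in> PiM I M \<rightarrow>\<^sub>M F i"
    using assms \<open>i \<in> I\<close> by (fastforce simp: measurable_def subalgebra_def)
qed (use assms in \<open>auto simp: space_PiM subalgebra_def\<close>)

lemma distr_PiM_restr_to_subalg:
  assumes sub: "subalgebra M F" and M: "prob_space M" and I: "finite I"
  shows "distr (PiM I (\<lambda>_. M)) (PiM I (\<lambda>_. F)) (\<lambda>x. x) = PiM I (\<lambda>_. restr_to_subalg M F)"
proof -
  let ?R = "restr_to_subalg M F"
  interpret product_sigma_finite "\<lambda>_. ?R"
    using prob_space_restr_to_subalg[OF sub M]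
    by (simp add: product_sigma_finite_def prob_space_imp_sigma_finite)
  interpret M: product_sigma_finite "\<lambda>_. M"
    using M by (simp add: product_sigma_finite_def prob_space_imp_sigma_finite)
  show ?thesis
  proof (rule PiM_eqI[OF I])
    show "sets (distr (PiM I (\<lambda>_. M)) (PiM I (\<lambda>_. F)) (\<lambda>x. x)) = sets (PiM I (\<lambda>_. ?R))"
      using sub by (auto simp: sets_restr_to_subalg intro!: sets_PiM_cong)
    fix A assume "\<And>i. i \<in> I \<Longrightarrow> A i \<in> sets ?R"
    then have AF: "\<And>i. i \<in> I \<Longrightarrow> A i \<in> sets F" and AM: "\<And>i. i \<in> I \<Longrightarrow> A i \<in> sets M"
      using sub by (auto simp: sets_restr_to_subalg subalgebra_def)
    have "emeasure (distr (PiM I (\<lambda>_. M)) (PiM I (\<lambda>_. F)) (\<lambda>x. x)) (Pi\<^sub>E I A)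
        = emeasure (PiM I (\<lambda>_. M)) (Pi\<^sub>E I A)"
      using AF AM[THEN sets.sets_into_space] measurable_ident_PiM_subalgebra[of I "\<lambda>_. M" "\<lambda>_. F"] sub
      by (subst emeasure_distr) (auto intro!: sets_PiM_I_finite I arg_cong[where f="emeasure _"]
          simp: space_PiM PiE_iff)
    also have "\<dots> = (\<Prod>i\<in>I. emeasure ?R (A i))"
      using AM AF I by (simp add: M.emeasure_PiM emeasure_restr_to_subalg[OF sub])
    finally show "emeasure (distr (PiM I (\<lambda>_. M)) (PiM I (\<lambda>_. F)) (\<lambda>x. x)) (Pi\<^sub>E I A)
        = (\<Prod>i\<in>I. emeasure ?R (A i))" .
  qed
qed

lemma integral_PiM_restr_to_subalg:
  fixes f :: "_ \<Rightarrow> real"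
  assumes sub: "subalgebra M F" and "prob_space M" and "finite I"
    and f: "f \<in> borel_measurable (PiM I (\<lambda>_. F))"
  shows "(\<integral>x. f x \<partial>PiM I (\<lambda>_. M)) = (\<integral>x. f x \<partial>PiM I (\<lambda>_. restr_to_subalg M F))"
proof -
  have "(\<lambda>x. x) \<in> PiM I (\<lambda>_. M) \<rightarrow>\<^sub>M PiM I (\<lambda>_. F)"
    using sub by (rule measurable_ident_PiM_subalgebra)
  from integral_distr[OF this f] show ?thesis
    by (simp add: distr_PiM_restr_to_subalg assms)
qed

lemma restr_to_subalg_cong:
  assumes "subalgebra M F" and "subalgebra N F"
    and "\<And>A. A \<in> sets F \<Longrightarrow> emeasure M A = emeasure N A"
  shows "restr_to_subalg M F = restr_to_subalg N F"
proof -
  have "space N = space M" "space F = space M"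
    using assms(1,2) by (auto simp: subalgebra_def)
  then show ?thesis
    unfolding restr_to_subalg_def
    using sets.space_closed[of F] sets.sigma_sets_eq[of F] assms(3)
    by (auto intro!: measure_of_eq)
qed

lemma integral_PiM_component:
  fixes f :: "_ \<Rightarrow> real"
  assumes "prob_space M" and "i \<in> I" and "f \<in> borel_measurable M"
  shows "(\<integral>\<sigma>. f (\<sigma> i) \<partial>PiM I (\<lambda>_. M)) = (\<integral>x. f x \<partial>M)"
  using integral_distr[OF measurable_component_singleton[OF \<open>i \<in> I\<close>] \<open>f \<in> _\<close>]
    distr_PiM_component[of I "\<lambda>_. M" i] assms by simp

lemma subalgebra_Fsub:
  assumes "sets M = sets (cfg :: ('v \<Rightarrow> 'a) measure)"
  shows "subalgebra M (Fsub D :: ('v \<Rightarrow> 'a) measure)"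
proof -
  have restrict: "(\<lambda>\<omega>. restrict \<omega> D) \<in> (cfg :: ('v \<Rightarrow> 'a) measure) \<rightarrow>\<^sub>M PiM D (\<lambda>_. count_space UNIV)"
    unfolding cfg_def by (rule measurable_restrict_subset) auto
  have "sets (Fsub D :: ('v \<Rightarrow> 'a) measure) \<subseteq> sets cfg"
    unfolding Fsub_def
    using measurable_space[OF restrict] measurable_sets[OF restrict]
    by (subst sets_vimage_algebra2) auto
  then show ?thesis
    using assms sets_eq_imp_space_eq[OF assms] by (simp add: subalgebra_def Fsub_def)
qed

lemma M1D:
  assumes "\<mu> \<in> M1"
  shows "prob_space \<mu>" and "sets \<mu> = sets cfg"
  using assms unfolding M1_def by auto

lemma space_PiM_M1:
  assumes "\<mu> \<in> M1"
  shows "space (PiM {..<q} (\<lambda>_. \<mu>)) = space (qpow q cfg)"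
  using sets_eq_imp_space_eq[OF M1D(2)[OF assms]] by (simp add: qpow_def space_PiM)

lemma measurable_q_kernel:
  fixes k :: "(nat \<Rightarrow> 'v \<Rightarrow> 'a) \<Rightarrow> ('v \<Rightarrow> 'a) measure"
  assumes \<mu>: "\<mu> \<in> M1" and k: "prob_q_kernel q L k"
  shows "k \<in> PiM {..<q} (\<lambda>_. \<mu>) \<rightarrow>\<^sub>M prob_algebra cfg"
proof (rule measurable_prob_algebraI)
  let ?P = "PiM {..<q} (\<lambda>_. \<mu>)"
  have k_prob: "prob_space (k \<sigma>)" and k_sets: "sets (k \<sigma>) = sets cfg" if "\<sigma> \<in> space ?P" for \<sigma>
    using k that space_PiM_M1[OF \<mu>] by (auto simp: prob_q_kernel_def)
  show "prob_space (k \<sigma>)" if "\<sigma> \<in> space ?P" for \<sigma>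
    using that by (rule k_prob)
  show "k \<in> ?P \<rightarrow>\<^sub>M subprob_algebra cfg"
  proof (rule measurable_subprob_algebra)
    fix A :: "('v \<Rightarrow> 'a) set" assume A: "A \<in> sets cfg"
    have "(\<lambda>x. x) \<in> ?P \<rightarrow>\<^sub>M qpow q (Fsub (- L))"
      unfolding qpow_def
      by (rule measurable_ident_PiM_subalgebra) (rule subalgebra_Fsub[OF M1D(2)[OF \<mu>]])
    moreover have "(\<lambda>\<sigma>. measure (k \<sigma>) A) \<in> borel_measurable (qpow q (Fsub (- L)))"
      using k A by (auto simp: prob_q_kernel_def)
    ultimately have "(\<lambda>\<sigma>. ennreal (measure (k \<sigma>) A)) \<in> borel_measurable ?P"
      by (simp add: measurable_compose[of "\<lambda>x. x"])
    then show "(\<lambda>\<sigma>. emeasure (k \<sigma>) A) \<in> borel_measurable ?P"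
      by (rule measurable_cong[THEN iffD1, rotated])
        (simp add: k_prob finite_measure.emeasure_eq_measure prob_space.axioms(1))
  qed (use k_prob k_sets prob_space_imp_subprob_space in auto)
qed

lemma emeasure_bind_q_kernel:
  fixes k :: "(nat \<Rightarrow> 'v \<Rightarrow> 'a) \<Rightarrow> ('v \<Rightarrow> 'a) measure"
  assumes \<mu>: "\<mu> \<in> M1" and k: "prob_q_kernel q L k" and A: "A \<in> sets cfg"
  shows "emeasure (PiM {..<q} (\<lambda>_. \<mu>) \<bind> k) A
    = ennreal (\<integral>\<sigma>. measure (k \<sigma>) A \<partial>PiM {..<q} (\<lambda>_. \<mu>))"
proof -
  let ?P = "PiM {..<q} (\<lambda>_. \<mu>)"
  interpret P: prob_space ?P
    using M1D(1)[OF \<mu>] by (auto intro: prob_space_PiM)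
  have k_meas: "k \<in> ?P \<rightarrow>\<^sub>M prob_algebra cfg"
    using \<mu> k by (rule measurable_q_kernel)
  have k_prob: "prob_space (k \<sigma>)" if "\<sigma> \<in> space ?P" for \<sigma>
    using measurable_space[OF k_meas that] by (simp add: space_prob_algebra)
  have "emeasure (?P \<bind> k) A = (\<integral>\<^sup>+\<sigma>. emeasure (k \<sigma>) A \<partial>?P)"
    using k_meas A
    by (intro emeasure_bind_prob_algebra) (auto simp: space_prob_algebra P.prob_space_axioms)
  also have "\<dots> = (\<integral>\<^sup>+\<sigma>. ennreal (measure (k \<sigma>) A) \<partial>?P)"
    by (rule nn_integral_cong) (simp add: k_prob finite_measure.emeasure_eq_measure prob_space.axioms(1))
  also have "\<dots> = ennreal (\<integral>\<sigma>. measure (k \<sigma>) A \<partial>?P)"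
    using measurable_compose[OF k_meas measurable_measure_prob_algebra[OF A]] k_prob
    by (intro nn_integral_eq_integral P.integrable_const_bound[where B=1])
      (auto intro!: AE_I2 prob_space.prob_le_1)
  finally show ?thesis .
qed

lemma Vmap_eq_bind:
  fixes \<gamma> :: "'v set \<Rightarrow> (nat \<Rightarrow> 'v \<Rightarrow> 'a) \<Rightarrow> ('v \<Rightarrow> 'a) measure"
  assumes \<mu>: "\<mu> \<in> M1" and k: "prob_q_kernel q L (\<gamma> L)"
  shows "Vmap q \<gamma> L \<mu> = PiM {..<q} (\<lambda>_. \<mu>) \<bind> \<gamma> L"
proof -
  let ?P = "PiM {..<q} (\<lambda>_. \<mu>)"
  have "?P \<in> space (prob_algebra ?P)"
    using M1D(1)[OF \<mu>] by (auto simp: space_prob_algebra intro: prob_space_PiM)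
  then have sets_bind: "sets (?P \<bind> \<gamma> L) = sets cfg"
    using measurable_q_kernel[OF \<mu> k] by (rule sets_bind')
  have "Vmap q \<gamma> L \<mu> = measure_of (space cfg) (sets cfg) (emeasure (?P \<bind> \<gamma> L))"
    unfolding Vmap_def
    by (rule measure_of_eq)
      (auto simp: sets.space_closed sets.sigma_sets_eq emeasure_bind_q_kernel[OF \<mu> k])
  also have "\<dots> = ?P \<bind> \<gamma> L"
    using measure_of_of_measure[of "?P \<bind> \<gamma> L"] sets_bind sets_eq_imp_space_eq[OF sets_bind] by simp
  finally show ?thesis .
qed

lemma Vmap_in_M1:
  fixes \<gamma> :: "'v set \<Rightarrow> (nat \<Rightarrow> 'v \<Rightarrow> 'a) \<Rightarrow> ('v \<Rightarrow> 'a) measure"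
  assumes \<mu>: "\<mu> \<in> M1" and k: "prob_q_kernel q L (\<gamma> L)"
  shows "Vmap q \<gamma> L \<mu> \<in> M1"
proof -
  let ?P = "PiM {..<q} (\<lambda>_. \<mu>)"
  have "?P \<in> space (prob_algebra ?P)"
    using M1D(1)[OF \<mu>] by (auto simp: space_prob_algebra intro: prob_space_PiM)
  with measurable_q_kernel[OF \<mu> k] show ?thesis
    by (simp add: Vmap_eq_bind[where \<gamma>=\<gamma>, OF \<mu> k] M1_def prob_space_bind' sets_bind')
qed

lemma emeasure_Vmap:
  fixes \<gamma> :: "'v set \<Rightarrow> (nat \<Rightarrow> 'v \<Rightarrow> 'a) \<Rightarrow> ('v \<Rightarrow> 'a) measure"
  assumes "\<mu> \<in> M1" and "prob_q_kernel q L (\<gamma> L)" and "A \<in> sets cfg"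
  shows "emeasure (Vmap q \<gamma> L \<mu>) A
    = ennreal (\<integral>\<sigma>. measure (\<gamma> L \<sigma>) A \<partial>PiM {..<q} (\<lambda>_. \<mu>))"
  using assms by (simp add: Vmap_eq_bind emeasure_bind_q_kernel)

lemma emeasure_Vmap_Fsub:
  fixes \<gamma> :: "'v set \<Rightarrow> (nat \<Rightarrow> 'v \<Rightarrow> 'a) \<Rightarrow> ('v \<Rightarrow> 'a) measure"
  assumes \<mu>: "\<mu> \<in> M1" and k: "prob_q_kernel q L (\<gamma> L)" and proper: "proper_q_kernel q L (\<gamma> L)"
    and q: "q \<ge> 1" and B: "B \<in> sets (Fsub (- L))"
  shows "emeasure (Vmap q \<gamma> L \<mu>) B = emeasure \<mu> B"
proof -
  let ?P = "PiM {..<q} (\<lambda>_. \<mu>)"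
  interpret P: prob_space ?P
    using M1D(1)[OF \<mu>] by (auto intro: prob_space_PiM)
  interpret \<mu>: prob_space \<mu>
    using M1D(1)[OF \<mu>] .
  have B_cfg: "B \<in> sets cfg" and B_\<mu>: "B \<in> sets \<mu>"
    using B subalgebra_Fsub[of cfg "- L"] M1D(2)[OF \<mu>] by (auto simp: subalgebra_def)
  have "(\<integral>\<sigma>. measure (\<gamma> L \<sigma>) B \<partial>?P)
      = (\<integral>\<sigma>. 1 / real q * (\<Sum>i<q. indicator B (\<sigma> i)) \<partial>?P)"
    using proper B space_PiM_M1[OF \<mu>]
    by (intro Bochner_Integration.integral_cong) (auto simp: proper_q_kernel_def)
  also have "\<dots> = 1 / real q * (\<Sum>i<q. \<integral>\<sigma>. indicator B (\<sigma> i) \<partial>?P)"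
    using B_\<mu> by (simp add: P.integrable_const_bound[where B=1])
  also have "\<dots> = 1 / real q * (\<Sum>i<q. measure \<mu> B)"
    using B_\<mu> by (simp add: integral_PiM_component \<mu>.prob_space_axioms)
  also have "\<dots> = measure \<mu> B"
    using q by simp
  finally show ?thesis
    using emeasure_Vmap[where \<gamma>=\<gamma>, OF \<mu> k B_cfg] by (simp add: \<mu>.emeasure_eq_measure)
qed

lemma Vmap_cong_Fsub:
  fixes \<gamma> :: "'v set \<Rightarrow> (nat \<Rightarrow> 'v \<Rightarrow> 'a) \<Rightarrow> ('v \<Rightarrow> 'a) measure"
  assumes \<mu>: "\<mu> \<in> M1" and \<nu>: "\<nu> \<in> M1" and k: "prob_q_kernel q L (\<gamma> L)"
    and agree: "\<And>B. B \<in> sets (Fsub (- L)) \<Longrightarrow> emeasure \<mu> B = emeasure \<nu> B"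
  shows "Vmap q \<gamma> L \<mu> = Vmap q \<gamma> L \<nu>"
proof -
  let ?F = "Fsub (- L) :: ('v \<Rightarrow> 'a) measure"
  have sub_\<mu>: "subalgebra \<mu> ?F" and sub_\<nu>: "subalgebra \<nu> ?F"
    using subalgebra_Fsub M1D(2) \<mu> \<nu> by blast+
  have restr_eq: "restr_to_subalg \<mu> ?F = restr_to_subalg \<nu> ?F"
    using sub_\<mu> sub_\<nu> agree by (rule restr_to_subalg_cong)
  have "(\<integral>\<sigma>. measure (\<gamma> L \<sigma>) A \<partial>PiM {..<q} (\<lambda>_. \<mu>))
      = (\<integral>\<sigma>. measure (\<gamma> L \<sigma>) A \<partial>PiM {..<q} (\<lambda>_. \<nu>))"
    if A: "A \<in> sets cfg" for A
  proof -
    have f: "(\<lambda>\<sigma>. measure (\<gamma> L \<sigma>) A) \<in> borel_measurable (PiM {..<q} (\<lambda>_. ?F))"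
      using k A by (auto simp: prob_q_kernel_def qpow_def)
    show ?thesis
      using integral_PiM_restr_to_subalg[OF sub_\<mu> M1D(1)[OF \<mu>] finite_lessThan f]
        integral_PiM_restr_to_subalg[OF sub_\<nu> M1D(1)[OF \<nu>] finite_lessThan f] restr_eq
      by simp
  qed
  then show ?thesis
    unfolding Vmap_def by (intro measure_of_eq) (auto simp: sets.space_closed sets.sigma_sets_eq)
qed

lemma Vmap_idempotent:
  fixes \<gamma> :: "'v set \<Rightarrow> (nat \<Rightarrow> 'v \<Rightarrow> 'a) \<Rightarrow> ('v \<Rightarrow> 'a) measure"
  assumes "\<mu> \<in> M1" and "prob_q_kernel q L (\<gamma> L)" and "proper_q_kernel q L (\<gamma> L)" and "q \<ge> 1"
  shows "Vmap q \<gamma> L (Vmap q \<gamma> L \<mu>) = Vmap q \<gamma> L \<mu>"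
  using assms by (intro Vmap_cong_Fsub Vmap_in_M1 emeasure_Vmap_Fsub)

theorem mainTheorem10:
  fixes q :: nat
    and \<gamma> :: "'v::countable set \<Rightarrow> (nat \<Rightarrow> 'v \<Rightarrow> 'a::finite) \<Rightarrow> ('v \<Rightarrow> 'a) measure"
  assumes "q \<ge> 1"
    and "q_specification q \<gamma>"
    and "assumption1 q \<gamma>"
  shows "Gq q \<gamma> = (\<Inter>L\<in>{L. finite L}. Vmap q \<gamma> L ` M1)"
proof
  show "Gq q \<gamma> \<subseteq> (\<Inter>L\<in>{L. finite L}. Vmap q \<gamma> L ` M1)"
    unfolding Gq_def by (auto intro!: image_eqI[where x=\<mu> for \<mu>])
next
  have kernel: "prob_q_kernel q L (\<gamma> L)" and proper: "proper_q_kernel q L (\<gamma> L)" if "finite L" for L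
    using assms(2) that by (auto simp: q_specification_def)
  show "(\<Inter>L\<in>{L. finite L}. Vmap q \<gamma> L ` M1) \<subseteq> Gq q \<gamma>"
  proof
    fix \<mu> assume \<mu>: "\<mu> \<in> (\<Inter>L\<in>{L. finite L}. Vmap q \<gamma> L ` M1)"
    then have "\<mu> \<in> M1"
      using Vmap_in_M1[where \<gamma>=\<gamma>, OF _ kernel[of "{}"]] by auto
    moreover have "Vmap q \<gamma> L \<mu> = \<mu>" if "finite L" for L
      using \<mu> that Vmap_idempotent[where \<gamma>=\<gamma>, OF _ kernel proper \<open>q \<ge> 1\<close>] by auto
    ultimately show "\<mu> \<in> Gq q \<gamma>"
      by (simp add: Gq_def)
  qed
qed

end
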